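(* Let $p\in P_i$ be a right link state of a rook-Brauer $n$-diagram with exactly $i$ defects, and let $d_p\in\mathcal{RB}_n(\delta,\varepsilon)$ be the diagram defined by: if $\bar a$ is isolated in $p$ then $a$ and $\bar a$ are isolated in $d_p$; if $\bar a,\bar b$ are joined by a non-propagating edge in $p$ then $d_p$ has non-propagating edges $\{a,b\}$ and $\{\bar a,\bar b\}$; if $p$ has a defect at $\bar a$ then $d_p$ has the propagating edge $\{a,\bar a\}$. If $y$ is a diagram in $J_p$, then $yd_p=\delta^{\alpha}\varepsilon^{\beta}y$, where $\alpha$ is the number of non-propagating edges in $p$ and $\beta$ is the number of isolated vertices in $p$.
   Context: Let $k$ be a unital commutative ring, $n$ a positive integer, $\delta,\varepsilon\in k$. A rook-Brauer $n$-diagram is a graph on vertices $1,\dots,n$ (left column, top to bottom) and $\bar1,\dots,\bar n$ (right column) in which each edge joins two distinct vertices and each vertex lies on at most one edge; diagrams are determined by which pairs are joined. Edges joining the two columns are propagating, edges within one column non-propagating, vertices on no edge isolated. $\mathcal{RB}_n(\delta,\varepsilon)$ is the free $k$-module on these diagrams with product: identify the right column of $d_1$ with the left column of $d_2$ (middle column); let $\alpha'$ be the number of closed loops lying in the middle column and $\beta'$ the number of other connected components lying entirely in the middle column (isolated middle vertices, or paths with both ends in the middle column); let $d_3$ join two outer vertices iff they are joined by a path; $d_1d_2=\delta^{\alpha'}\varepsilon^{\beta'} d_3$. The right link state of a diagram records, for each right vertex $\bar a$, whether it lies on a propagating edge (a defect at $\bar a$), is joined by a non-propagating edge to a specified $\bar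 b$, or is isolated. $P_i$ is the set of right link states of rook-Brauer $n$-diagrams with exactly $i$ defects. A splice replaces two defects by a non-propagating edge joining their vertices; a deletion replaces a defect by an isolated vertex. $J_p$ is the left ideal of $\mathcal{RB}_n(\delta,\varepsilon)$ spanned by the diagrams whose right link state is obtained from $p$ by a (possibly empty) sequence of splices and deletions. *)

theory Defs
  imports Main
begin

text \<open>Vertices: left column \<open>Lv a\<close> and right column \<open>Rv a\<close> (written \<open>\<bar>a\<close> in the paper),
  for \<open>a \<in> {1..n}\<close>.\<close>

datatype vert = Lv nat | Rv nat

definition verts :: "nat \<Rightarrow> vert set" where
  "verts n = Lv ` {1..n} \<union> Rv ` {1..n}"

definition rb_diagram :: "nat \<Rightarrow> vert set set \<Rightarrow> bool" where
  "rb_diagram n D \<longleftrightarrow>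
     (\<forall>e\<in>D. \<exists>u v. e = {u, v} \<and> u \<noteq> v \<and> u \<in> verts n \<and> v \<in> verts n) \<and>
     (\<forall>e\<in>D. \<forall>e'\<in>D. e \<inter> e' \<noteq> {} \<longrightarrow> e = e')"

text \<open>Stacking: vertices of the three columns are pairs (column, index), column 0 = left of d1,
  column 1 = middle, column 2 = right of d2. Edges of d1 and d2 are kept separately
  (multigraph), so parallel middle edges form a closed loop.\<close>

fun emb1 :: "vert \<Rightarrow> nat \<times> nat" where
  "emb1 (Lv a) = (0, a)" | "emb1 (Rv a) = (1, a)"

fun emb2 :: "vert \<Rightarrow> nat \<times> nat" where
  "emb2 (Lv a) = (1, a)" | "emb2 (Rv a) = (2, a)"

definition adj1 :: "vert set set \<Rightarrow> nat \<times> nat \<Rightarrow> nat \<times> nat \<Rightarrow> bool" where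
  "adj1 d1 x y \<longleftrightarrow> (\<exists>e\<in>d1. emb1 ` e = {x, y} \<and> x \<noteq> y)"

definition adj2 :: "vert set set \<Rightarrow> nat \<times> nat \<Rightarrow> nat \<times> nat \<Rightarrow> bool" where
  "adj2 d2 x y \<longleftrightarrow> (\<exists>e\<in>d2. emb2 ` e = {x, y} \<and> x \<noteq> y)"

definition conn :: "vert set set \<Rightarrow> vert set set \<Rightarrow> nat \<times> nat \<Rightarrow> nat \<times> nat \<Rightarrow> bool" where
  "conn d1 d2 = (\<lambda>x y. adj1 d1 x y \<or> adj2 d2 x y)\<^sup>*\<^sup>*"

definition verts3 :: "nat \<Rightarrow> (nat \<times> nat) set" where
  "verts3 n = {0, 1, 2} \<times> {1..n}"

definition middle :: "nat \<Rightarrow> (nat \<times> nat) set" where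
  "middle n = {1} \<times> {1..n}"

definition components :: "nat \<Rightarrow> vert set set \<Rightarrow> vert set set \<Rightarrow> (nat \<times> nat) set set" where
  "components n d1 d2 = {{y \<in> verts3 n. conn d1 d2 x y} | x. x \<in> verts3 n}"

text \<open>Closed loops in the middle column: middle components in which every vertex lies on an edge
  of d1 and on an edge of d2 (degree 2). The other middle components (isolated vertices and
  paths with both ends in the middle column) are counted by \<open>beta'\<close>.\<close>

definition loops_mid :: "nat \<Rightarrow> vert set set \<Rightarrow> vert set set \<Rightarrow> (nat \<times> nat) set set" where
  "loops_mid n d1 d2 = {C \<in> components n d1 d2. C \<subseteq> middle n \<and>
      (\<forall>x\<in>C. (\<exists>y. adj1 d1 x y) \<and> (\<exists>y. adj2 d2 x y))}"

definition other_mid :: "nat \<Rightarrow> vert set set \<Rightarrow> vert set set \<Rightarrow> (nat \<times> nat) set set" where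
  "other_mid n d1 d2 = {C \<in> components n d1 d2. C \<subseteq> middle n \<and>
      \<not> (\<forall>x\<in>C. (\<exists>y. adj1 d1 x y) \<and> (\<exists>y. adj2 d2 x y))}"

fun outer :: "vert \<Rightarrow> nat \<times> nat" where
  "outer (Lv a) = (0, a)" | "outer (Rv a) = (2, a)"

definition comp_diagram :: "nat \<Rightarrow> vert set set \<Rightarrow> vert set set \<Rightarrow> vert set set" where
  "comp_diagram n d1 d2 = {{u, v} | u v. u \<in> verts n \<and> v \<in> verts n \<and> u \<noteq> v \<and>
      conn d1 d2 (outer u) (outer v)}"

text \<open>Elements of the free \<open>k\<close>-module are coefficient functions on diagrams; the product of
  basis diagrams \<open>d1 d2 = \<delta>^\<alpha>' \<epsilon>^\<beta>' d3\<close>.\<close>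

definition rb_prod :: "nat \<Rightarrow> 'k::comm_ring_1 \<Rightarrow> 'k \<Rightarrow> vert set set \<Rightarrow> vert set set \<Rightarrow> (vert set set \<Rightarrow> 'k)" where
  "rb_prod n \<delta> \<epsilon> d1 d2 = (\<lambda>d. if d = comp_diagram n d1 d2
      then \<delta> ^ card (loops_mid n d1 d2) * \<epsilon> ^ card (other_mid n d1 d2) else 0)"

definition basis_elt :: "vert set set \<Rightarrow> 'k::comm_ring_1 \<Rightarrow> (vert set set \<Rightarrow> 'k)" where
  "basis_elt d c = (\<lambda>d'. if d' = d then c else 0)"

datatype lstate = Defect | Joined nat | Isol

definition rls :: "vert set set \<Rightarrow> nat \<Rightarrow> lstate" where
  "rls d a = (if \<exists>b. {Lv b, Rv a} \<in> d then Defect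
              else if \<exists>b. b \<noteq> a \<and> {Rv a, Rv b} \<in> d then Joined (THE b. b \<noteq> a \<and> {Rv a, Rv b} \<in> d)
              else Isol)"

definition num_defects :: "(nat \<Rightarrow> lstate) \<Rightarrow> nat" where
  "num_defects p = card {a. p a = Defect}"

definition P :: "nat \<Rightarrow> nat \<Rightarrow> (nat \<Rightarrow> lstate) set" where
  "P n i = {rls d | d. rb_diagram n d \<and> num_defects (rls d) = i}"

definition splice :: "(nat \<Rightarrow> lstate) \<Rightarrow> (nat \<Rightarrow> lstate) \<Rightarrow> bool" where
  "splice p q \<longleftrightarrow> (\<exists>a b. a \<noteq> b \<and> p a = Defect \<and> p b = Defect \<and> q = p(a := Joined b, b := Joined a))"

definition deletion :: "(nat \<Rightarrow> lstate) \<Rightarrow> (nat \<Rightarrow> lstate) \<Rightarrow> bool" where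
  "deletion p q \<longleftrightarrow> (\<exists>a. p a = Defect \<and> q = p(a := Isol))"

definition J :: "nat \<Rightarrow> (nat \<Rightarrow> lstate) \<Rightarrow> vert set set set" where
  "J n p = {y. rb_diagram n y \<and> (\<lambda>q q'. splice q q' \<or> deletion q q')\<^sup>*\<^sup>* p (rls y)}"

definition d_of :: "nat \<Rightarrow> (nat \<Rightarrow> lstate) \<Rightarrow> vert set set" where
  "d_of n p = {{Lv a, Rv a} | a. a \<in> {1..n} \<and> p a = Defect}
            \<union> {{Lv a, Lv b} | a b. a \<in> {1..n} \<and> p a = Joined b}
            \<union> {{Rv a, Rv b} | a b. a \<in> {1..n} \<and> p a = Joined b}"

definition np_edges :: "nat \<Rightarrow> (nat \<Rightarrow> lstate) \<Rightarrow> nat set set" where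
  "np_edges n p = {{a, b} | a b. a \<in> {1..n} \<and> p a = Joined b}"

definition isolated :: "nat \<Rightarrow> (nat \<Rightarrow> lstate) \<Rightarrow> nat set" where
  "isolated n p = {a \<in> {1..n}. p a = Isol}"

end

theory Submission
  imports Defs
begin

(* Since the right link state of y arises from p by splices and deletions, each
   non-propagating edge {Rv a, Rv b} of p is an edge of y, and every right vertex of y on a
   propagating edge or on a new non-propagating edge is a defect of p.  In the stacked
   diagram of y over d_p, the propagating edge {Lv a, Rv a} of d_p continues each defect of p
   straight through, so two outer vertices are connected exactly when they are joined in y,
   and the product diagram is y itself.  The components inside the middle column are the
   closed loops formed by {Rv a, Rv b} in y and {Lv a, Lv b} in d_p, one for each
   non-propagating edge of p, and the single middle vertices of the isolated vertices of p.
   Connectivity in the stacked graph is decided through an explicit representative of each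
   component. *)

lemma rb_diagram_edgeE:
  assumes "rb_diagram n d" "e \<in> d"
  obtains u v where "e = {u, v}" "u \<noteq> v" "u \<in> verts n" "v \<in> verts n"
  using assms(1) assms(2) unfolding rb_diagram_def by (metis (no_types))

lemma rb_diagram_edgeD:
  assumes "rb_diagram n d" "{u, v} \<in> d"
  shows "u \<noteq> v" "u \<in> verts n" "v \<in> verts n"
proof -
  obtain u' v' where "{u, v} = {u', v'}" "u' \<noteq> v'" "u' \<in> verts n" "v' \<in> verts n"
    using rb_diagram_edgeE[OF assms] .
  then show "u \<noteq> v" "u \<in> verts n" "v \<in> verts n"
    by (auto simp: doubleton_eq_iff)
qed

lemma rb_diagram_edge_unique:
  assumes "rb_diagram n d" "{u, v} \<in> d" "{u, w} \<in> d"
  shows "v = w"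
proof -
  have "\<forall>e\<in>d. \<forall>e'\<in>d. e \<inter> e' \<noteq> {} \<longrightarrow> e = e'"
    using assms(1) unfolding rb_diagram_def by (rule conjunct2)
  then have "{u, v} = {u, w}"
    using assms(2,3) by auto
  then show ?thesis
    by (auto simp: doubleton_eq_iff)
qed

lemma in_verts_iff [simp]:
  "Lv a \<in> verts n \<longleftrightarrow> a \<in> {1..n}" "Rv a \<in> verts n \<longleftrightarrow> a \<in> {1..n}"
  unfolding verts_def by auto

definition mate :: "vert set set \<Rightarrow> vert \<Rightarrow> vert option" where
  "mate d u = (if \<exists>v. {u, v} \<in> d then Some (THE v. {u, v} \<in> d) else None)"

lemma mate_eq_Some_iff:
  assumes "rb_diagram n d"
  shows "mate d u = Some v \<longleftrightarrow> {u, v} \<in> d"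
proof -
  have "(THE v. {u, v} \<in> d) = w" if "{u, w} \<in> d" for w
    using that rb_diagram_edge_unique[OF assms] by blast
  then show ?thesis
    unfolding mate_def by auto
qed

lemma mate_eq_None_iff: "mate d u = None \<longleftrightarrow> (\<forall>v. {u, v} \<notin> d)"
  unfolding mate_def by auto

lemma mate_sym:
  assumes "rb_diagram n d" "mate d u = Some v"
  shows "mate d v = Some u"
  using assms by (simp add: mate_eq_Some_iff insert_commute)

lemma rls_eq_case_mate:
  assumes d: "rb_diagram n d"
  shows "rls d a = (case mate d (Rv a) of None \<Rightarrow> Isol | Some (Lv _) \<Rightarrow> Defect | Some (Rv b) \<Rightarrow> Joined b)"
proof (cases "mate d (Rv a)")
  case None
  then have "\<forall>v. {Rv a, v} \<notin> d"
    by (simp add: mate_eq_None_iff)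
  with None show ?thesis
    unfolding rls_def by (simp add: insert_commute)
next
  case (Some w)
  then have edge: "{Rv a, w} \<in> d"
    using mate_eq_Some_iff[OF d] by blast
  have unique: "{Rv a, v} \<in> d \<Longrightarrow> v = w" for v
    using edge rb_diagram_edge_unique[OF d] by blast
  show ?thesis
  proof (cases w)
    case (Lv c)
    then show ?thesis
      using edge Some unfolding rls_def by (auto simp: insert_commute)
  next
    case (Rv b)
    then have "b \<noteq> a"
      using rb_diagram_edgeD(1)[OF d edge] by auto
    have "\<not> (\<exists>c. {Lv c, Rv a} \<in> d)"
      using unique Rv by (metis insert_commute vert.distinct(1))
    moreover have "(THE b. b \<noteq> a \<and> {Rv a, Rv b} \<in> d) = b"
      using unique edge Rv \<open>b \<noteq> a\<close> by blast
    ultimately show ?thesis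
      using edge Rv Some \<open>b \<noteq> a\<close> unfolding rls_def by auto
  qed
qed

definition link_state :: "nat \<Rightarrow> (nat \<Rightarrow> lstate) \<Rightarrow> bool" where
  "link_state n p \<longleftrightarrow> (\<forall>a. p a \<noteq> Isol \<longrightarrow> a \<in> {1..n}) \<and>
     (\<forall>a b. p a = Joined b \<longrightarrow> p b = Joined a \<and> b \<noteq> a)"

lemma link_state_rls:
  assumes d: "rb_diagram n d"
  shows "link_state n (rls d)"
proof -
  have "a \<in> {1..n}" if not_isol: "rls d a \<noteq> Isol" for a
  proof -
    obtain w where "mate d (Rv a) = Some w"
      using not_isol rls_eq_case_mate[OF d, of a] by (auto split: option.splits)
    then have "{Rv a, w} \<in> d"
      using mate_eq_Some_iff[OF d] by blast
    then show "a \<in> {1..n}"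
      using rb_diagram_edgeD(2)[OF d] by force
  qed
  moreover have "rls d b = Joined a \<and> b \<noteq> a" if "rls d a = Joined b" for a b
  proof -
    have ab: "mate d (Rv a) = Some (Rv b)"
      using that rls_eq_case_mate[OF d, of a] by (auto split: option.splits vert.splits)
    then have "mate d (Rv b) = Some (Rv a)"
      by (rule mate_sym[OF d])
    moreover have "Rv a \<noteq> Rv b"
      using ab rb_diagram_edgeD(1)[OF d] mate_eq_Some_iff[OF d] by blast
    ultimately show ?thesis
      using rls_eq_case_mate[OF d, of b] by auto
  qed
  ultimately show ?thesis
    unfolding link_state_def by blast
qed

definition link_reduct :: "(nat \<Rightarrow> lstate) \<Rightarrow> (nat \<Rightarrow> lstate) \<Rightarrow> bool" where
  "link_reduct p r \<longleftrightarrow>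
     (\<forall>a b. p a = Joined b \<longrightarrow> r a = Joined b) \<and> (\<forall>a. r a = Defect \<longrightarrow> p a = Defect) \<and>
     (\<forall>a b. r a = Joined b \<longrightarrow> p a = Joined b \<or> p a = Defect \<and> p b = Defect)"

lemma link_reductD:
  assumes "link_reduct p r"
  shows "p a = Joined b \<Longrightarrow> r a = Joined b"
    and "r a = Defect \<Longrightarrow> p a = Defect"
    and "r a = Joined b \<Longrightarrow> p a = Joined b \<or> p a = Defect \<and> p b = Defect"
  using assms unfolding link_reduct_def by blast+

lemma link_reduct_refl: "link_reduct p p"
  unfolding link_reduct_def by simp

lemma link_reduct_trans: "link_reduct p q \<Longrightarrow> link_reduct q r \<Longrightarrow> link_reduct p r"
  unfolding link_reduct_def by blast

lemma splice_link_reduct: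
  assumes "splice p q"
  shows "link_reduct p q"
proof -
  obtain a b where "a \<noteq> b" "p a = Defect" "p b = Defect" "q = p(a := Joined b, b := Joined a)"
    using assms unfolding splice_def by blast
  then show ?thesis
    unfolding link_reduct_def by auto
qed

lemma deletion_link_reduct:
  assumes "deletion p q"
  shows "link_reduct p q"
proof -
  obtain a where "p a = Defect" "q = p(a := Isol)"
    using assms unfolding deletion_def by blast
  then show ?thesis
    unfolding link_reduct_def by auto
qed

lemma link_reduct_if_rtranclp:
  "(\<lambda>q q'. splice q q' \<or> deletion q q')\<^sup>*\<^sup>* p r \<Longrightarrow> link_reduct p r"
  by (induction rule: rtranclp_induct)
    (auto intro: link_reduct_refl link_reduct_trans splice_link_reduct deletion_link_reduct)

definition pair_rep :: "(nat \<Rightarrow> nat option) \<Rightarrow> nat \<Rightarrow> nat" where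
  "pair_rep M a = (case M a of None \<Rightarrow> a | Some b \<Rightarrow> min a b)"

lemma pair_rep_None: "M a = None \<Longrightarrow> pair_rep M a = a"
  unfolding pair_rep_def by simp

lemma pair_rep_Some: "M a = Some b \<Longrightarrow> M b = Some a \<Longrightarrow> pair_rep M a = pair_rep M b"
  unfolding pair_rep_def by (simp add: min.commute)

lemma pair_rep_cases: "pair_rep M a = a \<or> M a = Some (pair_rep M a)"
  unfolding pair_rep_def by (auto simp: min_def split: option.splits)

lemma pair_rep_eqD:
  assumes sym: "\<And>a b. M a = Some b \<Longrightarrow> M b = Some a"
    and eq: "pair_rep M c = pair_rep M a"
  shows "c = a \<or> M a = Some c"
proof -
  have "pair_rep M a = c \<or> M c = Some (pair_rep M a)"
    using pair_rep_cases[of M c] eq by simp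
  moreover have "pair_rep M a = a \<or> M a = Some (pair_rep M a)"
    by (rule pair_rep_cases)
  ultimately show ?thesis
    using sym by (metis option.inject)
qed

lemma symp_rtranclp_iff_eq_rep:
  assumes step: "\<And>x z. R x z \<Longrightarrow> x \<in> V \<and> z \<in> V \<and> f x = f z"
    and path: "\<And>x. x \<in> V \<Longrightarrow> R\<^sup>*\<^sup>* x (f x)"
    and "symp R"
  shows "R\<^sup>*\<^sup>* x z \<longleftrightarrow> x = z \<or> x \<in> V \<and> z \<in> V \<and> f x = f z"
proof
  assume "R\<^sup>*\<^sup>* x z"
  then show "x = z \<or> x \<in> V \<and> z \<in> V \<and> f x = f z"
    by (induction rule: rtranclp_induct) (auto dest: step)
next
  have "R\<^sup>*\<^sup>* (f z) z" if "z \<in> V" for z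
    using path[OF that] symp_rtranclp[OF \<open>symp R\<close>] by (blast dest: sympD)
  then show "x = z \<or> x \<in> V \<and> z \<in> V \<and> f x = f z \<Longrightarrow> R\<^sup>*\<^sup>* x z"
    using path by (metis rtranclp.rtrancl_refl rtranclp_trans)
qed

lemma inj_image_eq_doubleton_iff:
  assumes "inj f"
  shows "f ` e = {x, z} \<longleftrightarrow> (\<exists>u v. e = {u, v} \<and> x = f u \<and> z = f v)"
proof
  assume img: "f ` e = {x, z}"
  then obtain u v where uv: "u \<in> e" "x = f u" "v \<in> e" "z = f v"
    by (metis imageE insertI1 insertI2)
  have "w = u \<or> w = v" if "w \<in> e" for w
    using img that uv assms by (auto dest: injD)
  then show "\<exists>u v. e = {u, v} \<and> x = f u \<and> z = f v"
    using uv by blast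
qed auto

lemma ex_edge_image_iff:
  assumes "inj f"
  shows "(\<exists>e\<in>d. f ` e = {x, z} \<and> x \<noteq> z) \<longleftrightarrow> (\<exists>u v. {u, v} \<in> d \<and> u \<noteq> v \<and> x = f u \<and> z = f v)"
  using inj_image_eq_doubleton_iff[OF assms] assms by (auto dest: injD)

lemma inj_emb1: "inj emb1"
  by (rule injI) (elim emb1.elims; auto)

lemma inj_emb2: "inj emb2"
  by (rule injI) (elim emb2.elims; auto)

lemma adj1_iff:
  assumes "rb_diagram n d"
  shows "adj1 d x z \<longleftrightarrow> (\<exists>u v. {u, v} \<in> d \<and> x = emb1 u \<and> z = emb1 v)"
  unfolding adj1_def ex_edge_image_iff[OF inj_emb1] using rb_diagram_edgeD(1)[OF assms] by blast

definition left_mate :: "vert set set \<Rightarrow> nat \<Rightarrow> nat option" where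
  "left_mate d c = (case mate d (Lv c) of Some (Lv c') \<Rightarrow> Some c' | _ \<Rightarrow> None)"

definition right_mate :: "vert set set \<Rightarrow> nat \<Rightarrow> nat option" where
  "right_mate d a = (case mate d (Rv a) of Some (Rv b) \<Rightarrow> Some b | _ \<Rightarrow> None)"

definition link_mate :: "(nat \<Rightarrow> lstate) \<Rightarrow> nat \<Rightarrow> nat option" where
  "link_mate p a = (case p a of Joined b \<Rightarrow> Some b | _ \<Rightarrow> None)"

lemma left_mate_eq_Some_iff: "left_mate d c = Some c' \<longleftrightarrow> mate d (Lv c) = Some (Lv c')"
  unfolding left_mate_def by (auto split: option.splits vert.splits)

lemma right_mate_eq_Some_iff: "right_mate d a = Some b \<longleftrightarrow> mate d (Rv a) = Some (Rv b)"
  unfolding right_mate_def by (auto split: option.splits vert.splits)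

lemma link_mate_eq_Some_iff: "link_mate p a = Some b \<longleftrightarrow> p a = Joined b"
  unfolding link_mate_def by (auto split: lstate.splits)

(* A right vertex
   at a defect of p is represented like its middle neighbour, a left vertex on a propagating
   edge of y by the middle end of that edge, and the two ends of any other edge by the end
   with the smaller index. *)
definition stack_rep :: "vert set set \<Rightarrow> (nat \<Rightarrow> lstate) \<Rightarrow> nat \<times> nat \<Rightarrow> nat \<times> nat" where
  "stack_rep d p = (\<lambda>(k, c).
     if k = 0 then (case mate d (Lv c) of Some (Rv a) \<Rightarrow> (1, a) | _ \<Rightarrow> (0, pair_rep (left_mate d) c))
     else if k = 1 \<or> p c = Defect then (1, pair_rep (right_mate d) c)
     else (2, pair_rep (link_mate p) c))"

lemma stack_rep_simps:
  "stack_rep d p (0, c) =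
     (case mate d (Lv c) of Some (Rv a) \<Rightarrow> (1, a) | _ \<Rightarrow> (0, pair_rep (left_mate d) c))"
  "stack_rep d p (1, a) = (1, pair_rep (right_mate d) a)"
  "stack_rep d p (Suc 0, a) = (1, pair_rep (right_mate d) a)"
  "stack_rep d p (2, a) =
     (if p a = Defect then (1, pair_rep (right_mate d) a) else (2, pair_rep (link_mate p) a))"
  unfolding stack_rep_def by simp_all

lemma rtranclp_pair_rep:
  assumes "\<And>b. M a = Some b \<Longrightarrow> R (f a) (f b)"
  shows "R\<^sup>*\<^sup>* (f a) (f (pair_rep M a))"
  using assms unfolding pair_rep_def by (auto simp: min_def split: option.splits)

lemma verts3_iff: "(k, c) \<in> verts3 n \<longleftrightarrow> k \<in> {0, 1, 2} \<and> c \<in> {1..n}"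
  unfolding verts3_def by auto

locale link_reduct_product =
  fixes n :: nat and y :: "vert set set" and p :: "nat \<Rightarrow> lstate"
  assumes diagram: "rb_diagram n y"
    and link_state: "link_state n p"
    and reduct: "link_reduct p (rls y)"
begin

abbreviation "D \<equiv> d_of n p"
abbreviation "rep \<equiv> stack_rep y p"
abbreviation "adj x z \<equiv> adj1 y x z \<or> adj2 D x z"

lemma in_range: "p a \<noteq> Isol \<Longrightarrow> a \<in> {1..n}"
  using link_state unfolding link_state_def by blast

lemma Joined_sym: "p a = Joined b \<Longrightarrow> p b = Joined a \<and> b \<noteq> a"
  using link_state unfolding link_state_def by blast

lemma mate_Rv_if_Joined: "p a = Joined b \<Longrightarrow> mate y (Rv a) = Some (Rv b)"
  using link_reductD(1)[OF reduct] rls_eq_case_mate[OF diagram, of a]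
  by (auto split: option.splits vert.splits)

lemma Defect_if_mate_Rv_Lv: "mate y (Rv a) = Some (Lv c) \<Longrightarrow> p a = Defect"
  using link_reductD(2)[OF reduct] rls_eq_case_mate[OF diagram, of a] by simp

lemma Joined_or_Defect_if_mate_Rv_Rv:
  "mate y (Rv a) = Some (Rv b) \<Longrightarrow> p a = Joined b \<or> p a = Defect \<and> p b = Defect"
  using link_reductD(3)[OF reduct] rls_eq_case_mate[OF diagram, of a] by simp

lemma left_mate_sym: "left_mate y c = Some c' \<Longrightarrow> left_mate y c' = Some c"
  unfolding left_mate_eq_Some_iff by (rule mate_sym[OF diagram])

lemma link_mate_sym: "link_mate p a = Some b \<Longrightarrow> link_mate p b = Some a"
  unfolding link_mate_eq_Some_iff using Joined_sym by blast

lemma right_mate_sym: "right_mate y a = Some b \<Longrightarrow> right_mate y b = Some a"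
  unfolding right_mate_eq_Some_iff by (rule mate_sym[OF diagram])

lemma right_mate_None_if_propagating:
  assumes "mate y (Lv c) = Some (Rv a)"
  shows "right_mate y a = None"
  using mate_sym[OF diagram assms] by (simp add: right_mate_def)

lemma adj2_iff:
  "adj2 D x z \<longleftrightarrow>
     (\<exists>a. p a = Defect \<and> (x = (1, a) \<and> z = (2, a) \<or> x = (2, a) \<and> z = (1, a))) \<or>
     (\<exists>a b. p a = Joined b \<and> (x = (1, a) \<and> z = (1, b) \<or> x = (2, a) \<and> z = (2, b)))"
  (is "_ \<longleftrightarrow> ?edge")
proof
  assume "adj2 D x z"
  then obtain u v where uv: "{u, v} \<in> D" "x = emb2 u" "z = emb2 v"
    unfolding adj2_def ex_edge_image_iff[OF inj_emb2] by blast
  from uv(1) show ?edge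
    unfolding d_of_def
  proof (elim UnE CollectE exE conjE)
    fix a
    assume "{u, v} = {Lv a, Rv a}" "p a = Defect"
    then show ?edge
      using uv by (auto simp: doubleton_eq_iff)
  next
    fix a b
    assume "{u, v} = {Lv a, Lv b}" "p a = Joined b"
    then show ?edge
      using uv Joined_sym[of a b] by (auto simp: doubleton_eq_iff)
  next
    fix a b
    assume "{u, v} = {Rv a, Rv b}" "p a = Joined b"
    then show ?edge
      using uv Joined_sym[of a b] by (auto simp: doubleton_eq_iff)
  qed
next
  have defect_edge: "{Lv a, Rv a} \<in> D" if "p a = Defect" for a
    using that in_range[of a] unfolding d_of_def by auto
  have joined_edges: "{Lv a, Lv b} \<in> D \<and> {Rv a, Rv b} \<in> D \<and> b \<noteq> a" if "p a = Joined b" for a b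
    using that in_range[of a] Joined_sym[of a b] unfolding d_of_def by auto
  assume ?edge
  then obtain u v where "{u, v} \<in> D" "u \<noteq> v" "x = emb2 u" "z = emb2 v"
  proof (elim disjE exE conjE)
    fix a
    assume "p a = Defect" "x = (1, a)" "z = (2, a)"
    then show thesis
      using that[of "Lv a" "Rv a"] defect_edge by simp
  next
    fix a
    assume "p a = Defect" "x = (2, a)" "z = (1, a)"
    then show thesis
      using that[of "Rv a" "Lv a"] defect_edge by (simp add: insert_commute)
  next
    fix a b
    assume "p a = Joined b" "x = (1, a)" "z = (1, b)"
    then show thesis
      using that[of "Lv a" "Lv b"] joined_edges[of a b] by simp
  next
    fix a b
    assume "p a = Joined b" "x = (2, a)" "z = (2, b)"
    then show thesis
      using that[of "Rv a" "Rv b"] joined_edges[of a b] by simp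
  qed
  then show "adj2 D x z"
    unfolding adj2_def ex_edge_image_iff[OF inj_emb2] by blast
qed

lemma adj_if_edge: "{u, v} \<in> y \<Longrightarrow> adj (emb1 u) (emb1 v)"
  using adj1_iff[OF diagram] by blast

lemma symp_adj: "symp adj"
  unfolding symp_def adj1_def adj2_def by (auto simp: insert_commute)

lemma rep_left_eq_middle_iff: "rep (0, c) = (1, a) \<longleftrightarrow> mate y (Lv c) = Some (Rv a)"
  by (auto simp: stack_rep_simps split: option.split vert.split)

lemma rep_left_if_no_propagating:
  "(\<And>a. mate y (Lv c) \<noteq> Some (Rv a)) \<Longrightarrow> rep (0, c) = (0, pair_rep (left_mate y) c)"
  by (auto simp: stack_rep_simps split: option.split vert.split)

lemma rep_eq_if_adj1:
  assumes "adj1 y x z"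
  shows "x \<in> verts3 n \<and> z \<in> verts3 n \<and> rep x = rep z"
proof -
  obtain u v where uv: "{u, v} \<in> y" "x = emb1 u" "z = emb1 v"
    using assms adj1_iff[OF diagram] by blast
  have mates: "mate y u = Some v" "mate y v = Some u"
    using uv(1) mate_eq_Some_iff[OF diagram] by (auto simp: insert_commute)
  have "u \<in> verts n" "v \<in> verts n"
    using rb_diagram_edgeD[OF diagram uv(1)] by auto
  with uv mates show ?thesis
    by (cases u; cases v)
      (auto simp: stack_rep_simps verts3_iff left_mate_def right_mate_def pair_rep_def min.commute)
qed

lemma rep_eq_if_adj2:
  assumes "adj2 D x z"
  shows "x \<in> verts3 n \<and> z \<in> verts3 n \<and> rep x = rep z"
  using assms unfolding adj2_iff
proof (elim disjE exE conjE)
  fix a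
  assume "p a = Defect" "x = (1, a)" "z = (2, a)"
  then show ?thesis
    using in_range[of a] by (simp add: stack_rep_simps verts3_iff)
next
  fix a
  assume "p a = Defect" "x = (2, a)" "z = (1, a)"
  then show ?thesis
    using in_range[of a] by (simp add: stack_rep_simps verts3_iff)
next
  fix a b
  assume ab: "p a = Joined b" and xz: "x = (1, a)" "z = (1, b)"
  have "pair_rep (right_mate y) a = pair_rep (right_mate y) b"
    using ab Joined_sym[OF ab] mate_Rv_if_Joined
    by (intro pair_rep_Some) (simp_all add: right_mate_eq_Some_iff)
  then show ?thesis
    using xz in_range[of a] in_range[of b] ab Joined_sym[OF ab] by (simp add: stack_rep_simps verts3_iff)
next
  fix a b
  assume ab: "p a = Joined b" and xz: "x = (2, a)" "z = (2, b)"
  have "pair_rep (link_mate p) a = pair_rep (link_mate p) b"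
    using ab Joined_sym[OF ab] by (intro pair_rep_Some) (simp_all add: link_mate_eq_Some_iff)
  then show ?thesis
    using xz in_range[of a] in_range[of b] ab Joined_sym[OF ab] by (simp add: stack_rep_simps verts3_iff)
qed

lemma conn_rep_right:
  "conn y D (1, a) (rep (1, a))"
proof -
  have "adj (1, a) (1, b)" if "right_mate y a = Some b" for b
    using that adj_if_edge[of "Rv a" "Rv b"] mate_eq_Some_iff[OF diagram]
    by (simp add: right_mate_eq_Some_iff)
  then show ?thesis
    unfolding conn_def stack_rep_simps by (rule rtranclp_pair_rep)
qed

lemma conn_rep:
  assumes "x \<in> verts3 n"
  shows "conn y D x (rep x)"
proof -
  obtain k c where x: "x = (k, c)" and "k = 0 \<or> k = 1 \<or> k = 2"
    using assms by (cases x) (auto simp: verts3_iff)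
  then consider "x = (0, c)" | "x = (1, c)" | "x = (2, c)"
    by blast
  then show ?thesis
  proof cases
    case 1
    show ?thesis
    proof (cases "\<exists>a. mate y (Lv c) = Some (Rv a)")
      case True
      then obtain a where a: "mate y (Lv c) = Some (Rv a)"
        by blast
      then have "adj (0, c) (1, a)"
        using adj_if_edge[of "Lv c" "Rv a"] mate_eq_Some_iff[OF diagram] by simp
      then have "conn y D (0, c) (1, a)"
        unfolding conn_def by (rule r_into_rtranclp)
      moreover have "rep (0, c) = (1, a)"
        using a rep_left_eq_middle_iff by blast
      ultimately show ?thesis
        using 1 by simp
    next
      case False
      then have "rep (0, c) = (0, pair_rep (left_mate y) c)"
        using rep_left_if_no_propagating by blast
      moreover have "adj\<^sup>*\<^sup>* (0, c) (0, pair_rep (left_mate y) c)"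
      proof (rule rtranclp_pair_rep)
        fix c'
        assume "left_mate y c = Some c'"
        then show "adj (0, c) (0, c')"
          using adj_if_edge[of "Lv c" "Lv c'"] mate_eq_Some_iff[OF diagram]
          by (simp add: left_mate_eq_Some_iff)
      qed
      ultimately show ?thesis
        using 1 unfolding conn_def by simp
    qed
  next
    case 2
    then show ?thesis
      using conn_rep_right by simp
  next
    case 3
    show ?thesis
    proof (cases "p c")
      case Defect
      then have "adj (2, c) (1, c)"
        unfolding adj2_iff by auto
      then show ?thesis
        using conn_rep_right[of c] Defect 3 unfolding conn_def
        by (simp add: stack_rep_simps converse_rtranclp_into_rtranclp)
    next
      case (Joined b)
      have "adj\<^sup>*\<^sup>* (2, c) (2, pair_rep (link_mate p) c)"
        by (rule rtranclp_pair_rep) (auto simp: link_mate_eq_Some_iff adj2_iff)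
      with Joined 3 show ?thesis
        unfolding conn_def by (simp add: stack_rep_simps)
    next
      case Isol
      with 3 show ?thesis
        unfolding conn_def by (simp add: stack_rep_simps pair_rep_None link_mate_def)
    qed
  qed
qed

lemma conn_iff: "conn y D x z \<longleftrightarrow> x = z \<or> x \<in> verts3 n \<and> z \<in> verts3 n \<and> rep x = rep z"
  unfolding conn_def
proof (rule symp_rtranclp_iff_eq_rep[OF _ _ symp_adj])
  show "x \<in> verts3 n \<and> z \<in> verts3 n \<and> rep x = rep z" if "adj x z" for x z
    using that rep_eq_if_adj1 rep_eq_if_adj2 by blast
  show "adj\<^sup>*\<^sup>* x (rep x)" if "x \<in> verts3 n" for x
    using conn_rep[OF that] unfolding conn_def .
qed

abbreviation component :: "nat \<times> nat \<Rightarrow> (nat \<times> nat) set" where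
  "component x \<equiv> {z \<in> verts3 n. rep z = rep x}"

lemma components_eq: "components n y D = component ` verts3 n"
proof -
  have "{z \<in> verts3 n. conn y D x z} = component x" if "x \<in> verts3 n" for x
    using that by (auto simp: conn_iff)
  then show ?thesis
    unfolding components_def by force
qed

lemma right_rep_eqD:
  assumes "pair_rep (right_mate y) c = pair_rep (right_mate y) a" and "p a \<noteq> Defect"
  shows "c = a \<or> p a = Joined c"
proof -
  have "c = a \<or> right_mate y a = Some c"
    using pair_rep_eqD[OF right_mate_sym assms(1)] .
  then show ?thesis
    using Joined_or_Defect_if_mate_Rv_Rv assms(2) by (auto simp: right_mate_eq_Some_iff)
qed

lemma propagating_rep_eqD:
  assumes "mate y (Lv c) = Some (Rv (pair_rep (right_mate y) a))"
  shows "pair_rep (right_mate y) a = a"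
proof -
  let ?a0 = "pair_rep (right_mate y) a"
  have no_right_mate: "right_mate y ?a0 = None"
    using right_mate_None_if_propagating[OF assms] .
  then have "pair_rep (right_mate y) ?a0 = pair_rep (right_mate y) a"
    by (simp add: pair_rep_None)
  moreover have "right_mate y a \<noteq> Some ?a0"
    using no_right_mate right_mate_sym[of a ?a0] by auto
  ultimately show ?thesis
    using pair_rep_eqD[of "right_mate y", OF right_mate_sym] by blast
qed

lemma component_right_cases:
  assumes "p a \<noteq> Defect" and "z \<in> component (1, a)"
  shows "z = (1, a) \<or> (\<exists>b. p a = Joined b \<and> z = (1, b))"
proof -
  obtain k c where z: "z = (k, c)" and rep_eq: "rep (k, c) = (1, pair_rep (right_mate y) a)"
    using assms(2) by (cases z) (simp add: stack_rep_simps)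
  have "k = 0 \<or> k = 1 \<or> k = 2"
    using assms(2) z by (simp add: verts3_iff)
  then consider "k = 0" | "k = 1" | "k = 2"
    by blast
  then show ?thesis
  proof cases
    case 1
    then have propagating: "mate y (Lv c) = Some (Rv (pair_rep (right_mate y) a))"
      using rep_eq rep_left_eq_middle_iff by simp
    then have "mate y (Lv c) = Some (Rv a)"
      using propagating_rep_eqD[OF propagating] by simp
    then have "mate y (Rv a) = Some (Lv c)"
      by (rule mate_sym[OF diagram])
    then show ?thesis
      using Defect_if_mate_Rv_Lv assms(1) by blast
  next
    case 2
    then show ?thesis
      using rep_eq right_rep_eqD[OF _ assms(1)] z by (simp add: stack_rep_simps)
  next
    case 3
    then have "p c = Defect" "pair_rep (right_mate y) c = pair_rep (right_mate y) a"
      using rep_eq by (simp_all add: stack_rep_simps split: if_splits)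
    then show ?thesis
      using right_rep_eqD[OF _ assms(1)] assms(1) Joined_sym[of a c] by auto
  qed
qed

lemma component_Joined:
  assumes "p a = Joined b"
  shows "component (1, a) = {(1, a), (1, b)}"
proof
  show "component (1, a) \<subseteq> {(1, a), (1, b)}"
  proof
    fix z
    assume "z \<in> component (1, a)"
    then show "z \<in> {(1, a), (1, b)}"
      using component_right_cases[of a z] assms by auto
  qed
  have "adj2 D (1, a) (1, b)"
    using assms unfolding adj2_iff by blast
  then show "{(1, a), (1, b)} \<subseteq> component (1, a)"
    using rep_eq_if_adj2 by auto
qed

lemma component_Isol:
  assumes "p a = Isol" and "a \<in> {1..n}"
  shows "component (1, a) = {(1, a)}"
  using component_right_cases[of a] assms by (auto simp: verts3_iff)

lemma middle_component_iff:
  "C \<in> components n y D \<and> C \<subseteq> middle n \<longleftrightarrow>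
     (\<exists>a\<in>{1..n}. p a \<noteq> Defect \<and> C = component (1, a))"
proof
  assume C: "C \<in> components n y D \<and> C \<subseteq> middle n"
  then obtain x where x: "x \<in> verts3 n" "C = component x"
    unfolding components_eq by blast
  then obtain a where a: "x = (1, a)" "a \<in> {1..n}"
    using C unfolding middle_def by blast
  have "p a \<noteq> Defect"
  proof
    assume "p a = Defect"
    then have "(2, a) \<in> C"
      using x a rep_eq_if_adj2[of "(1, a)" "(2, a)"] unfolding adj2_iff by auto
    then show False
      using C unfolding middle_def by auto
  qed
  then show "\<exists>a\<in>{1..n}. p a \<noteq> Defect \<and> C = component (1, a)"
    using a x by blast
next
  assume "\<exists>a\<in>{1..n}. p a \<noteq> Defect \<and> C = component (1, a)"
  then obtain a where a: "a \<in> {1..n}" "p a \<noteq> Defect" "C = component (1, a)"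
    by blast
  then have "C \<in> components n y D"
    unfolding components_eq by (auto simp: verts3_iff)
  moreover have "C \<subseteq> middle n"
    using a component_right_cases[OF a(2)] unfolding middle_def by (auto simp: verts3_iff)
  ultimately show "C \<in> components n y D \<and> C \<subseteq> middle n"
    by blast
qed

lemma full_degree_Joined:
  assumes "p a = Joined b"
  shows "(\<exists>w. adj1 y (1, a) w) \<and> (\<exists>w. adj2 D (1, a) w)"
proof -
  have "{Rv a, Rv b} \<in> y"
    using mate_Rv_if_Joined[OF assms] mate_eq_Some_iff[OF diagram] by blast
  then have "adj1 y (1, a) (1, b)"
    using adj1_iff[OF diagram] by fastforce
  moreover have "adj2 D (1, a) (1, b)"
    using assms unfolding adj2_iff by blast
  ultimately show ?thesis
    by blast
qed

lemma full_degree_component_iff: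
  assumes "a \<in> {1..n}" and "p a \<noteq> Defect"
  shows "(\<forall>x\<in>component (1, a). (\<exists>w. adj1 y x w) \<and> (\<exists>w. adj2 D x w)) \<longleftrightarrow>
    (\<exists>b. p a = Joined b)"
proof (cases "p a")
  case (Joined b)
  then show ?thesis
    using component_Joined[OF Joined] full_degree_Joined[OF Joined]
      full_degree_Joined[of b a] Joined_sym[OF Joined] by auto
next
  case Isol
  then have "\<not> adj2 D (1, a) w" for w
    unfolding adj2_iff by auto
  then show ?thesis
    using component_Isol[OF Isol assms(1)] Isol by auto
qed (use assms in simp)

lemma loops_mid_eq: "loops_mid n y D = (\<lambda>e. Pair 1 ` e) ` np_edges n p"
proof (rule set_eqI)
  fix C
  let ?full = "\<forall>x\<in>C. (\<exists>w. adj1 y x w) \<and> (\<exists>w. adj2 D x w)"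
  have loop_iff: "p a \<noteq> Defect \<and> C = component (1, a) \<and> ?full \<longleftrightarrow>
      (\<exists>b. p a = Joined b \<and> C = Pair 1 ` {a, b})" if range: "a \<in> {1..n}" for a
  proof
    assume h: "p a \<noteq> Defect \<and> C = component (1, a) \<and> ?full"
    then obtain b where "p a = Joined b"
      using full_degree_component_iff[OF range] by blast
    with h show "\<exists>b. p a = Joined b \<and> C = Pair 1 ` {a, b}"
      using component_Joined by auto
  next
    assume "\<exists>b. p a = Joined b \<and> C = Pair 1 ` {a, b}"
    then obtain b where b: "p a = Joined b" "C = Pair 1 ` {a, b}"
      by blast
    then have "C = component (1, a)"
      using component_Joined by simp
    with b show "p a \<noteq> Defect \<and> C = component (1, a) \<and> ?full"
      using full_degree_component_iff[OF range] by auto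
  qed
  have "C \<in> loops_mid n y D \<longleftrightarrow> (\<exists>a\<in>{1..n}. p a \<noteq> Defect \<and> C = component (1, a) \<and> ?full)"
    unfolding loops_mid_def using middle_component_iff[of C] by blast
  also have "\<dots> \<longleftrightarrow> (\<exists>a\<in>{1..n}. \<exists>b. p a = Joined b \<and> C = Pair 1 ` {a, b})"
    by (rule bex_cong[OF refl loop_iff])
  also have "\<dots> \<longleftrightarrow> C \<in> (\<lambda>e. Pair 1 ` e) ` np_edges n p"
    unfolding np_edges_def by blast
  finally show "C \<in> loops_mid n y D \<longleftrightarrow> C \<in> (\<lambda>e. Pair 1 ` e) ` np_edges n p" .
qed

lemma other_mid_eq: "other_mid n y D = (\<lambda>a. {(1, a)}) ` isolated n p"
proof (rule set_eqI)
  fix C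
  let ?full = "\<forall>x\<in>C. (\<exists>w. adj1 y x w) \<and> (\<exists>w. adj2 D x w)"
  have other_iff: "p a \<noteq> Defect \<and> C = component (1, a) \<and> \<not> ?full \<longleftrightarrow> p a = Isol \<and> C = {(1, a)}"
    if range: "a \<in> {1..n}" for a
  proof
    assume h: "p a \<noteq> Defect \<and> C = component (1, a) \<and> \<not> ?full"
    then have "p a = Isol"
      using full_degree_component_iff[OF range] by (cases "p a") auto
    with h show "p a = Isol \<and> C = {(1, a)}"
      using component_Isol[OF _ range] by blast
  next
    assume h: "p a = Isol \<and> C = {(1, a)}"
    then have "C = component (1, a)"
      using component_Isol[OF _ range] by blast
    with h show "p a \<noteq> Defect \<and> C = component (1, a) \<and> \<not> ?full"
      using full_degree_component_iff[OF range] by simp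
  qed
  have "C \<in> other_mid n y D \<longleftrightarrow> (\<exists>a\<in>{1..n}. p a \<noteq> Defect \<and> C = component (1, a) \<and> \<not> ?full)"
    unfolding other_mid_def using middle_component_iff[of C] by blast
  also have "\<dots> \<longleftrightarrow> (\<exists>a\<in>{1..n}. p a = Isol \<and> C = {(1, a)})"
    by (rule bex_cong[OF refl other_iff])
  also have "\<dots> \<longleftrightarrow> C \<in> (\<lambda>a. {(1, a)}) ` isolated n p"
    unfolding isolated_def by blast
  finally show "C \<in> other_mid n y D \<longleftrightarrow> C \<in> (\<lambda>a. {(1, a)}) ` isolated n p" .
qed

lemma rep_right_eq_if_mate:
  assumes "mate y (Rv a) = Some (Rv b)"
  shows "rep (2, a) = rep (2, b)"
  using Joined_or_Defect_if_mate_Rv_Rv[OF assms]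
proof
  assume joined: "p a = Joined b"
  then have "p b = Joined a"
    using Joined_sym by blast
  moreover have "pair_rep (link_mate p) a = pair_rep (link_mate p) b"
    using joined calculation by (intro pair_rep_Some) (simp_all add: link_mate_eq_Some_iff)
  ultimately show ?thesis
    using joined by (simp add: stack_rep_simps)
next
  assume defects: "p a = Defect \<and> p b = Defect"
  have "pair_rep (right_mate y) a = pair_rep (right_mate y) b"
    using assms mate_sym[OF diagram assms] by (intro pair_rep_Some) (simp_all add: right_mate_eq_Some_iff)
  with defects show ?thesis
    by (simp add: stack_rep_simps)
qed

lemma rep_left_eq_if_mate:
  assumes "mate y (Lv c) = Some (Lv c')"
  shows "rep (0, c) = rep (0, c')"
proof -
  have mate_c': "mate y (Lv c') = Some (Lv c)"
    using mate_sym[OF diagram assms] .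
  have "left_mate y c = Some c'" "left_mate y c' = Some c"
    using assms mate_c' by (simp_all only: left_mate_eq_Some_iff)
  then have "pair_rep (left_mate y) c = pair_rep (left_mate y) c'"
    by (rule pair_rep_Some)
  with assms mate_c' show ?thesis
    by (simp add: stack_rep_simps)
qed

lemma rep_propagating_eq_if_mate:
  assumes "mate y (Lv c) = Some (Rv a)"
  shows "rep (0, c) = rep (2, a)"
proof -
  have "p a = Defect"
    using Defect_if_mate_Rv_Lv mate_sym[OF diagram assms] .
  moreover have "right_mate y a = None"
    using right_mate_None_if_propagating[OF assms] .
  ultimately show ?thesis
    using assms
    by (simp add: stack_rep_simps pair_rep_None)
qed

lemma rep_outer_eq_if_edge:
  assumes "{u, v} \<in> y"
  shows "rep (outer u) = rep (outer v)"
proof -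
  have mate_u: "mate y u = Some v"
    using assms by (simp add: mate_eq_Some_iff[OF diagram])
  have mate_v: "mate y v = Some u"
    using mate_sym[OF diagram mate_u] .
  show ?thesis
  proof (cases u; cases v)
    fix c c'
    assume "u = Lv c" "v = Lv c'"
    then show ?thesis
      using rep_left_eq_if_mate[of c c'] mate_u by simp
  next
    fix c a
    assume "u = Lv c" "v = Rv a"
    then show ?thesis
      using rep_propagating_eq_if_mate[of c a] mate_u by simp
  next
    fix a c
    assume "u = Rv a" "v = Lv c"
    then show ?thesis
      using rep_propagating_eq_if_mate[of c a] mate_v by simp
  next
    fix a b
    assume "u = Rv a" "v = Rv b"
    then show ?thesis
      using rep_right_eq_if_mate[of a b] mate_u by simp
  qed
qed

lemma edge_if_rep_eq_Lv_Lv: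
  assumes "c \<noteq> c'" and rep_eq: "rep (0, c) = rep (0, c')"
  shows "{Lv c, Lv c'} \<in> y"
proof (cases "\<exists>a. mate y (Lv c) = Some (Rv a)")
  case True
  then obtain a where "mate y (Lv c) = Some (Rv a)" "mate y (Lv c') = Some (Rv a)"
    using rep_eq rep_left_eq_middle_iff by metis
  then have "mate y (Rv a) = Some (Lv c)" "mate y (Rv a) = Some (Lv c')"
    using mate_sym[OF diagram] by blast+
  with \<open>c \<noteq> c'\<close> show ?thesis
    by simp
next
  case False
  then have "\<not> (\<exists>a. mate y (Lv c') = Some (Rv a))"
    using rep_eq rep_left_eq_middle_iff by metis
  with False have "pair_rep (left_mate y) c' = pair_rep (left_mate y) c"
    using rep_eq rep_left_if_no_propagating by auto
  then have "left_mate y c = Some c'"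
    using pair_rep_eqD[of "left_mate y", OF left_mate_sym] \<open>c \<noteq> c'\<close> by blast
  then show ?thesis
    by (simp add: left_mate_eq_Some_iff mate_eq_Some_iff[OF diagram])
qed

lemma edge_if_rep_eq_Lv_Rv:
  assumes rep_eq: "rep (0, c) = rep (2, a)"
  shows "{Lv c, Rv a} \<in> y"
proof -
  have "fst (rep (2, a)) \<noteq> 2"
    unfolding rep_eq[symmetric] by (simp add: stack_rep_simps split: option.split vert.split)
  then have "p a = Defect"
    by (simp add: stack_rep_simps split: if_splits)
  then have "rep (0, c) = (1, pair_rep (right_mate y) a)"
    using rep_eq by (simp add: stack_rep_simps)
  then have propagating: "mate y (Lv c) = Some (Rv (pair_rep (right_mate y) a))"
    using rep_left_eq_middle_iff by blast
  then show ?thesis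
    using propagating_rep_eqD[OF propagating] by (simp add: mate_eq_Some_iff[OF diagram])
qed

lemma edge_if_rep_eq_Rv_Rv:
  assumes "a \<noteq> b" and rep_eq: "rep (2, a) = rep (2, b)"
  shows "{Rv a, Rv b} \<in> y"
proof (cases "p a = Defect")
  case True
  then have "pair_rep (right_mate y) b = pair_rep (right_mate y) a"
    using rep_eq by (simp add: stack_rep_simps split: if_splits)
  then have "right_mate y a = Some b"
    using pair_rep_eqD[of "right_mate y", OF right_mate_sym] \<open>a \<noteq> b\<close> by blast
  then show ?thesis
    by (simp add: right_mate_eq_Some_iff mate_eq_Some_iff[OF diagram])
next
  case False
  then have "pair_rep (link_mate p) b = pair_rep (link_mate p) a"
    using rep_eq by (simp add: stack_rep_simps split: if_splits)
  then have "p a = Joined b"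
    using pair_rep_eqD[of "link_mate p", OF link_mate_sym] \<open>a \<noteq> b\<close> link_mate_eq_Some_iff by blast
  then show ?thesis
    using mate_Rv_if_Joined mate_eq_Some_iff[OF diagram] by blast
qed

lemma conn_outer_iff:
  assumes "u \<in> verts n" "v \<in> verts n" "u \<noteq> v"
  shows "conn y D (outer u) (outer v) \<longleftrightarrow> {u, v} \<in> y"
proof -
  have "outer u \<noteq> outer v" "outer u \<in> verts3 n" "outer v \<in> verts3 n"
    using assms by (cases u; cases v; simp add: verts3_iff)+
  then have "conn y D (outer u) (outer v) \<longleftrightarrow> rep (outer u) = rep (outer v)"
    by (simp add: conn_iff)
  also have "\<dots> \<longleftrightarrow> {u, v} \<in> y"
  proof
    assume "rep (outer u) = rep (outer v)"
    with \<open>u \<noteq> v\<close> show "{u, v} \<in> y"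
      using edge_if_rep_eq_Lv_Lv edge_if_rep_eq_Lv_Rv edge_if_rep_eq_Rv_Rv
      by (cases u; cases v) (auto simp: insert_commute)
  qed (rule rep_outer_eq_if_edge)
  finally show ?thesis .
qed

lemma comp_diagram_eq: "comp_diagram n y D = y"
proof (rule set_eqI)
  fix e
  show "e \<in> comp_diagram n y D \<longleftrightarrow> e \<in> y"
  proof
    assume "e \<in> comp_diagram n y D"
    then obtain u v where "e = {u, v}" "u \<in> verts n" "v \<in> verts n" "u \<noteq> v"
        "conn y D (outer u) (outer v)"
      unfolding comp_diagram_def by blast
    then show "e \<in> y"
      using conn_outer_iff by blast
  next
    assume "e \<in> y"
    moreover obtain u v where "e = {u, v}" "u \<noteq> v" "u \<in> verts n" "v \<in> verts n"
      using rb_diagram_edgeE[OF diagram \<open>e \<in> y\<close>] .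
    ultimately show "e \<in> comp_diagram n y D"
      using conn_outer_iff unfolding comp_diagram_def by blast
  qed
qed

lemma rb_prod_d_of:
  "rb_prod n \<delta> \<epsilon> y D = basis_elt y (\<delta> ^ card (np_edges n p) * \<epsilon> ^ card (isolated n p))"
proof -
  have loops_card: "card (loops_mid n y D) = card (np_edges n p)"
    unfolding loops_mid_eq by (intro card_image inj_on_image) (simp add: inj_on_def)
  have other_card: "card (other_mid n y D) = card (isolated n p)"
    unfolding other_mid_eq by (intro card_image inj_onI) simp
  show ?thesis
    unfolding rb_prod_def basis_elt_def comp_diagram_eq loops_card other_card ..
qed

end

theorem lemma7p5:
  fixes n i :: nat and p :: "nat \<Rightarrow> lstate" and y :: "vert set set"
    and \<delta> \<epsilon> :: "'k::comm_ring_1"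
  assumes "0 < n"
    and "p \<in> P n i"
    and "y \<in> J n p"
  shows "rb_prod n \<delta> \<epsilon> y (d_of n p)
           = basis_elt y (\<delta> ^ card (np_edges n p) * \<epsilon> ^ card (isolated n p))"
proof -
  obtain d where "rb_diagram n d" "p = rls d"
    using assms(2) unfolding P_def by blast
  then have "link_state n p"
    using link_state_rls by simp
  moreover have "rb_diagram n y" "link_reduct p (rls y)"
    using assms(3) link_reduct_if_rtranclp unfolding J_def by auto
  ultimately interpret link_reduct_product n y p
    by unfold_locales
  show ?thesis
    by (rule rb_prod_d_of)
qed

end
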